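(* Let $f\ge0$ be integrable on $[-\pi,\pi]$ with $\int f>0$ and such that $\lim_{n\to\infty}\sigma_{n+1}^2(f)/\sigma_n^2(f)=1$, and let $p_n$ be the optimal polynomial for $f$. If $g$ is a nonnegative, bounded, measurable function on $[-\pi,\pi]$ that is continuous at $\lambda=0$, then $$\lim_{n\to\infty}\frac{\mathrm{Var}_{fg}(\widehat m_f)}{\sigma_n^2(f)}=g(0),\qquad \mathrm{Var}_{fg}(\widehat m_f):=\int_{-\pi}^{\pi}|p_n(e^{i\lambda})|^2f(\lambda)g(\lambda)\,d\lambda .$$
   Context: $\sigma_n^2(f)=\min_{q\in\mathcal{Q}_n(1)}\int_{-\pi}^{\pi}|q(e^{i\lambda})|^2f(\lambda)\,d\lambda$, with $\mathcal{Q}_n(1)$ the complex polynomials of degree at most $n$ satisfying $q(1)=1$; $p_n$ is the unique minimizer. $\mathrm{Var}_{fg}(\widehat m_f)$ is the variance, under spectral density $fg$, of the BLUE of the mean computed assuming spectral density $f$. *)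

theory Defs
  imports "HOL-Analysis.Analysis" "HOL-Computational_Algebra.Polynomial"
begin

definition Qn1 :: "nat \<Rightarrow> complex poly set" where
  "Qn1 n = {q. degree q \<le> n \<and> poly q 1 = 1}"

definition qform :: "(real \<Rightarrow> real) \<Rightarrow> complex poly \<Rightarrow> real" where
  "qform w q = (LINT x:{-pi..pi}|lborel. (cmod (poly q (cis x)))^2 * w x)"

definition sigma2 :: "(real \<Rightarrow> real) \<Rightarrow> nat \<Rightarrow> real" where
  "sigma2 f n = (INF q \<in> Qn1 n. qform f q)"

definition opt_poly :: "(real \<Rightarrow> real) \<Rightarrow> nat \<Rightarrow> complex poly" where
  "opt_poly f n = (THE p. p \<in> Qn1 n \<and> (\<forall>q \<in> Qn1 n. qform f p \<le> qform f q))"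

definition var_mis :: "(real \<Rightarrow> real) \<Rightarrow> (real \<Rightarrow> real) \<Rightarrow> nat \<Rightarrow> real" where
  "var_mis f g n = qform (\<lambda>x. f x * g x) (opt_poly f n)"

end

theory Submission
  imports Defs
begin

text \<open>Write \<open>a\<^sub>n(\<lambda>) = |p\<^sub>n(e\<^sup>i\<^sup>\<lambda>)|\<^sup>2 f(\<lambda>)\<close>, so that \<open>\<sigma>\<^sub>n\<^sup>2 = \<integral> a\<^sub>n\<close>. The polynomial
  \<open>p\<^sub>n(z) (1 + z) / 2\<close> lies in \<open>Q\<^sub>n\<^sub>+\<^sub>1(1)\<close> and \<open>|(1 + e\<^sup>i\<^sup>\<lambda>) / 2|\<^sup>2 = (1 + cos \<lambda>) / 2\<close>, hence
  \<open>\<integral> a\<^sub>n (1 - cos \<lambda>) \<le> 2 (\<sigma>\<^sub>n\<^sup>2 - \<sigma>\<^sub>n\<^sub>+\<^sub>1\<^sup>2) = o(\<sigma>\<^sub>n\<^sup>2)\<close>: the probability densities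
  \<open>a\<^sub>n / \<sigma>\<^sub>n\<^sup>2\<close> concentrate at \<open>\<lambda> = 0\<close>. Since \<open>g\<close> is bounded and continuous at 0, for every
  \<open>\<epsilon> > 0\<close> there is \<open>M\<close> with \<open>|g(\<lambda>) - g(0)| \<le> \<epsilon> + M (1 - cos \<lambda>)\<close>, and integrating against
  \<open>a\<^sub>n\<close> gives \<open>|Var / \<sigma>\<^sub>n\<^sup>2 - g(0)| \<le> \<epsilon> + 2 M (1 - \<sigma>\<^sub>n\<^sub>+\<^sub>1\<^sup>2 / \<sigma>\<^sub>n\<^sup>2)\<close>.

  Existence and uniqueness of \<open>p\<^sub>n\<close> come from the Riesz representation of \<open>q \<mapsto> q(1)\<close> with
  respect to the inner product \<open>\<integral> p q\<^sup>* f\<close> on polynomials of degree \<open>\<le> n\<close>, which is positive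
  definite because a nonzero polynomial has only finitely many zeros on the unit circle.\<close>

lemma set_integrable_bounded_mult:
  fixes F :: "'a \<Rightarrow> real" and G :: "'a \<Rightarrow> 'b::{real_normed_field, banach, second_countable_topology}"
  assumes F: "set_integrable M S F" and G: "set_borel_measurable M S G"
    and B: "\<And>x. x \<in> S \<Longrightarrow> norm (G x) \<le> B"
  shows "set_integrable M S (\<lambda>x. G x * of_real (F x))"
proof (rule set_integrable_bound)
  show "set_integrable M S (\<lambda>x. B * F x)"
    using F by simp
  have "(\<lambda>x. indicator S x *\<^sub>R F x) \<in> borel_measurable M"
    using F by (simp add: set_integrable_def)
  then have "(\<lambda>x. (indicator S x *\<^sub>R G x) * of_real (indicator S x *\<^sub>R F x)) \<in> borel_measurable M"
    using G unfolding set_borel_measurable_def by measurable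
  also have "(\<lambda>x. (indicator S x *\<^sub>R G x) * of_real (indicator S x *\<^sub>R F x))
      = (\<lambda>x. indicator S x *\<^sub>R (G x * of_real (F x)))"
    by (auto simp: indicator_def)
  finally show "set_borel_measurable M S (\<lambda>x. G x * of_real (F x))"
    unfolding set_borel_measurable_def .
  show "AE x in M. x \<in> S \<longrightarrow> norm (G x * of_real (F x)) \<le> norm (B * F x)"
  proof (intro AE_I2 impI)
    fix x assume "x \<in> S"
    then have "norm (G x) * \<bar>F x\<bar> \<le> \<bar>B\<bar> * \<bar>F x\<bar>"
      using B[of x] by (intro mult_right_mono) auto
    then show "norm (G x * of_real (F x)) \<le> norm (B * F x)"
      by (simp add: norm_mult abs_mult)
  qed
qed

lemma abs_set_integral_le:
  fixes u v :: "'a \<Rightarrow> real"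
  assumes "set_integrable M A u" "set_integrable M A v" "\<And>x. x \<in> A \<Longrightarrow> \<bar>u x\<bar> \<le> v x"
  shows "\<bar>LINT x:A|M. u x\<bar> \<le> (LINT x:A|M. v x)"
proof -
  have "\<bar>LINT x:A|M. u x\<bar> \<le> (LINT x:A|M. \<bar>u x\<bar>)"
    using set_integral_norm_bound[OF assms(1)] by simp
  also have "\<dots> \<le> (LINT x:A|M. v x)"
    using assms by (intro set_integral_mono set_integrable_abs)
  finally show ?thesis .
qed

lemma set_integral_nonneg:
  fixes u :: "'a \<Rightarrow> real"
  assumes "\<And>x. x \<in> A \<Longrightarrow> 0 \<le> u x"
  shows "0 \<le> (LINT x:A|M. u x)"
  unfolding set_lebesgue_integral_def
  by (intro Bochner_Integration.integral_nonneg_AE AE_I2) (simp add: assms split: split_indicator)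

lemma degree_diff_smult_coeff_le:
  fixes q h :: "'a::comm_ring_1 poly"
  assumes "degree q \<le> Suc n" "degree h \<le> Suc n" "coeff h (Suc n) = 1"
  shows "degree (q - smult (coeff q (Suc n)) h) \<le> n"
proof (rule degree_le, intro allI impI)
  fix i assume "n < i"
  then consider "i = Suc n" | "Suc n < i" by linarith
  then show "coeff (q - smult (coeff q (Suc n)) h) i = 0"
    by cases (use assms in \<open>auto simp: coeff_eq_0\<close>)
qed

lemma poly_cis_bounded:
  fixes p :: "complex poly"
  obtains C where "\<And>x. norm (poly p (cis x)) \<le> C"
proof -
  have "compact (poly p ` sphere 0 1)"
    by (intro compact_continuous_image continuous_intros) auto
  then obtain C where C: "\<forall>z \<in> sphere 0 1. norm (poly p z) \<le> C"
    by (auto dest!: compact_imp_bounded simp: bounded_iff)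
  show ?thesis
    using bspec[OF C] by (intro that[of C]) simp
qed

lemma finite_zeros_poly_cis:
  fixes p :: "complex poly"
  assumes "p \<noteq> 0"
  shows "finite {x \<in> {-pi<..pi}. poly p (cis x) = 0}"
proof (rule finite_imageD)
  show "finite (cis ` {x \<in> {-pi<..pi}. poly p (cis x) = 0})"
    by (rule finite_subset[OF _ poly_roots_finite[OF assms]]) auto
  show "inj_on cis {x \<in> {-pi<..pi}. poly p (cis x) = 0}"
    by (rule inj_on_inverseI[of _ Arg]) (simp add: Arg_cis)
qed

definition poly_inner :: "(real \<Rightarrow> real) \<Rightarrow> complex poly \<Rightarrow> complex poly \<Rightarrow> complex" where
  "poly_inner w p q = (LINT x:{-pi..pi}|lborel. poly p (cis x) * cnj (poly q (cis x)) * of_real (w x))"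

locale circle_weight =
  fixes f :: "real \<Rightarrow> real"
  assumes weight_integrable: "set_integrable lborel {-pi..pi} f"
begin

lemma set_integrable_continuous_mult_weight:
  fixes h :: "real \<Rightarrow> 'b::{real_normed_field, banach, second_countable_topology}"
  assumes "continuous_on {-pi..pi} h"
  shows "set_integrable lborel {-pi..pi} (\<lambda>x. h x * of_real (f x))"
proof -
  obtain B where "\<forall>x \<in> {-pi..pi}. norm (h x) \<le> B"
    using compact_continuous_image[OF assms compact_Icc]
    by (auto dest!: compact_imp_bounded simp: bounded_iff)
  moreover have "set_borel_measurable lborel {-pi..pi} h"
    using set_measurable_continuous_on[OF _ assms] by (simp add: set_borel_measurable_def)
  ultimately show ?thesis
    using set_integrable_bounded_mult[OF weight_integrable] by blast
qed

lemma set_integrable_poly_inner: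
  "set_integrable lborel {-pi..pi} (\<lambda>x. poly p (cis x) * cnj (poly q (cis x)) * of_real (f x))"
  by (intro set_integrable_continuous_mult_weight continuous_intros)

lemma set_integrable_qform:
  "set_integrable lborel {-pi..pi} (\<lambda>x. (cmod (poly p (cis x)))\<^sup>2 * f x)"
  using set_integrable_continuous_mult_weight[of "\<lambda>x. (cmod (poly p (cis x)))\<^sup>2"]
  by (simp add: continuous_intros)

lemma set_integrable_poly_cis_bounded_mult:
  fixes g :: "real \<Rightarrow> real"
  assumes g_meas: "set_borel_measurable lborel {-pi..pi} g"
    and g_bdd: "\<And>x. x \<in> {-pi..pi} \<Longrightarrow> \<bar>g x\<bar> \<le> B"
  shows "set_integrable lborel {-pi..pi} (\<lambda>x. (cmod (poly p (cis x)))\<^sup>2 * g x * f x)"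
proof -
  let ?S = "{-pi..pi}"
  obtain C where C: "\<And>x. norm (poly p (cis x)) \<le> C"
    using poly_cis_bounded[of p] by blast
  have "norm ((cmod (poly p (cis x)))\<^sup>2 * g x) \<le> C\<^sup>2 * B" if "x \<in> ?S" for x
    using C[of x] g_bdd[OF that] by (auto simp: abs_mult intro!: mult_mono power_mono)
  moreover have "(\<lambda>x. (cmod (poly p (cis x)))\<^sup>2) \<in> borel_measurable lborel"
    unfolding measurable_lborel2 by (intro borel_measurable_continuous_onI continuous_intros)
  then have "(\<lambda>x. (cmod (poly p (cis x)))\<^sup>2 * (indicator ?S x *\<^sub>R g x)) \<in> borel_measurable lborel"
    using g_meas unfolding set_borel_measurable_def by (intro borel_measurable_times)
  then have "set_borel_measurable lborel ?S (\<lambda>x. (cmod (poly p (cis x)))\<^sup>2 * g x)"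
    unfolding set_borel_measurable_def by (simp add: mult.left_commute)
  ultimately show ?thesis
    using set_integrable_bounded_mult[OF weight_integrable] by fastforce
qed

lemma poly_inner_add_left: "poly_inner f (p + q) r = poly_inner f p r + poly_inner f q r"
  unfolding poly_inner_def
  by (simp add: distrib_right set_integrable_poly_inner)

lemma poly_inner_smult_left: "poly_inner f (smult c p) q = c * poly_inner f p q"
  unfolding poly_inner_def by (simp add: mult.assoc)

lemma poly_inner_commute: "poly_inner f q p = cnj (poly_inner f p q)"
  unfolding poly_inner_def set_lebesgue_integral_def
  by (subst Bochner_Integration.integral_cnj[symmetric], rule Bochner_Integration.integral_cong)
     (auto simp: mult_ac)

lemma poly_inner_add_right: "poly_inner f r (p + q) = poly_inner f r p + poly_inner f r q"
  by (metis poly_inner_commute poly_inner_add_left complex_cnj_add)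

lemma poly_inner_smult_right: "poly_inner f p (smult c q) = cnj c * poly_inner f p q"
  by (metis poly_inner_commute poly_inner_smult_left complex_cnj_mult)

lemma poly_inner_diff_right: "poly_inner f r (p - q) = poly_inner f r p - poly_inner f r q"
  by (metis poly_inner_add_right diff_add_cancel eq_diff_eq)

lemma poly_inner_self: "poly_inner f p p = of_real (qform f p)"
proof -
  have "poly_inner f p p = (LINT x:{-pi..pi}|lborel. of_real ((cmod (poly p (cis x)))\<^sup>2 * f x))"
    unfolding poly_inner_def
    by (intro set_lebesgue_integral_cong) (auto simp flip: complex_norm_square)
  also have "\<dots> = of_real (qform f p)"
    unfolding qform_def by (rule set_integral_complex_of_real)
  finally show ?thesis .
qed

end

locale spectral_density = circle_weight +
  assumes weight_nonneg: "\<And>x. x \<in> {-pi..pi} \<Longrightarrow> 0 \<le> f x"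
    and weight_integral_pos: "0 < (LINT x:{-pi..pi}|lborel. f x)"
begin

lemma qform_nonneg: "0 \<le> qform f p"
  unfolding qform_def by (intro set_integral_nonneg mult_nonneg_nonneg weight_nonneg) auto

lemma qform_pos:
  assumes "p \<noteq> 0"
  shows "0 < qform f p"
proof (rule ccontr)
  let ?S = "{-pi..pi}"
  assume "\<not> 0 < qform f p"
  then have "integral\<^sup>L lborel (\<lambda>x. indicator ?S x *\<^sub>R ((cmod (poly p (cis x)))\<^sup>2 * f x)) = 0"
    using qform_nonneg[of p] unfolding qform_def set_lebesgue_integral_def by simp
  then have "AE x in lborel. indicator ?S x *\<^sub>R ((cmod (poly p (cis x)))\<^sup>2 * f x) = 0"
    using set_integrable_qform[of p] weight_nonneg
    by (subst (asm) integral_nonneg_eq_0_iff_AE) (auto simp: set_integrable_def split: split_indicator)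
  moreover have "AE x in lborel. x \<notin> insert (-pi) {x \<in> {-pi<..pi}. poly p (cis x) = 0}"
    using finite_zeros_poly_cis[OF assms] by (intro AE_not_in finite_imp_null_set_lborel) simp
  ultimately have "AE x in lborel. indicator ?S x *\<^sub>R f x = 0"
    by eventually_elim (auto split: split_indicator)
  then have "(LINT x:?S|lborel. f x) = 0"
    unfolding set_lebesgue_integral_def by (rule integral_eq_zero_AE)
  with weight_integral_pos show False
    by simp
qed

lemma poly_inner_representation_extend:
  assumes L_add: "\<And>p q. L (p + q) = L p + L q" and L_smult: "\<And>c p. L (smult c p) = c * L p"
    and r: "degree r \<le> n" and r_repr: "\<And>q. degree q \<le> n \<Longrightarrow> L q = poly_inner f q r"
    and h_degree: "degree h \<le> Suc n" and h_lead: "coeff h (Suc n) = 1"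
    and h_orth: "\<And>q. degree q \<le> n \<Longrightarrow> poly_inner f q h = 0"
  shows "\<exists>r'. degree r' \<le> Suc n \<and> (\<forall>q. degree q \<le> Suc n \<longrightarrow> L q = poly_inner f q r')"
proof -
  have "h \<noteq> 0"
    using h_lead by auto
  then have hh: "poly_inner f h h \<noteq> 0"
    using poly_inner_self[of h] qform_pos[of h] by auto
  define c where "c = cnj ((L h - poly_inner f h r) / poly_inner f h h)"
  show ?thesis
  proof (intro exI[of _ "r + smult c h"] conjI allI impI)
    show "degree (r + smult c h) \<le> Suc n"
      using r h_degree by (intro degree_add_le) (auto intro: order.trans[OF degree_smult_le])
    fix q :: "complex poly"
    assume "degree q \<le> Suc n"
    define q0 where "q0 = q - smult (coeff q (Suc n)) h"
    have q0: "degree q0 \<le> n"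
      unfolding q0_def using \<open>degree q \<le> Suc n\<close> h_degree h_lead by (rule degree_diff_smult_coeff_le)
    have "poly_inner f (q0 + smult (coeff q (Suc n)) h) (r + smult c h)
        = L q0 + coeff q (Suc n) * L h"
      using hh q0 h_orth[OF q0]
      by (simp add: poly_inner_add_left poly_inner_add_right poly_inner_smult_left
          poly_inner_smult_right r_repr c_def field_simps)
    also have "\<dots> = L (q0 + smult (coeff q (Suc n)) h)"
      by (simp add: L_add L_smult)
    finally show "L q = poly_inner f q (r + smult c h)"
      by (simp add: q0_def)
  qed
qed

text \<open>Gram-Schmidt: in the induction step, \<open>z\<^sup>n\<^sup>+\<^sup>1 - s\<close> is orthogonal to all polynomials of
  degree at most \<open>n\<close>, where \<open>s\<close> represents \<open>q \<mapsto> \<langle>q, z\<^sup>n\<^sup>+\<^sup>1\<rangle>\<close> on them.\<close>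

lemma poly_inner_representation:
  assumes "\<And>p q. L (p + q) = L p + L q" and "\<And>c p. L (smult c p) = c * L p"
  shows "\<exists>r. degree r \<le> n \<and> (\<forall>q. degree q \<le> n \<longrightarrow> L q = poly_inner f q r)"
  using assms
proof (induction n arbitrary: L)
  case 0
  have "poly_inner f 1 1 \<noteq> 0"
    using poly_inner_self[of 1] qform_pos[of 1] by auto
  define c where "c = cnj (L 1 / poly_inner f 1 1)"
  show ?case
  proof (intro exI[of _ "[:c:]"] conjI allI impI)
    fix q :: "complex poly"
    assume "degree q \<le> 0"
    then have q: "q = smult (coeff q 0) 1"
      by (metis degree_0_id le_zero_eq mult.right_neutral smult_pCons pCons_one smult_0_right)
    have "poly_inner f (smult (coeff q 0) 1) (smult c 1) = cnj c * (coeff q 0 * poly_inner f 1 1)"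
      by (simp only: poly_inner_smult_left poly_inner_smult_right)
    also have "\<dots> = coeff q 0 * L 1"
      using \<open>poly_inner f 1 1 \<noteq> 0\<close> by (simp add: c_def)
    also have "\<dots> = L (smult (coeff q 0) 1)"
      by (rule 0(2)[symmetric])
    finally show "L q = poly_inner f q [:c:]"
      by (metis q smult_one)
  qed simp
next
  case (Suc n)
  obtain s where s: "degree s \<le> n"
    and s_repr: "\<And>q. degree q \<le> n \<Longrightarrow> poly_inner f q (monom 1 (Suc n)) = poly_inner f q s"
    using Suc.IH[of "\<lambda>q. poly_inner f q (monom 1 (Suc n))"]
    by (auto simp: poly_inner_add_left poly_inner_smult_left)
  obtain r where "degree r \<le> n" "\<And>q. degree q \<le> n \<Longrightarrow> L q = poly_inner f q r"
    using Suc.IH[of L] Suc.prems by blast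
  moreover have "degree (monom 1 (Suc n) - s) \<le> Suc n"
    using s by (intro degree_diff_le) (auto intro: order.trans[OF degree_monom_le])
  moreover have "coeff (monom 1 (Suc n) - s) (Suc n) = 1"
    using s by (simp add: coeff_eq_0)
  moreover have "\<And>q. degree q \<le> n \<Longrightarrow> poly_inner f q (monom 1 (Suc n) - s) = 0"
    by (simp add: poly_inner_diff_right s_repr)
  ultimately show ?case
    by (rule poly_inner_representation_extend[OF Suc.prems])
qed

lemma qform_Qn1_pythagoras: "\<exists>p \<in> Qn1 n. \<forall>q \<in> Qn1 n. qform f q = qform f p + qform f (q - p)"
proof -
  obtain r where r: "degree r \<le> n" and r_repr: "\<And>q. degree q \<le> n \<Longrightarrow> poly q 1 = poly_inner f q r"
    using poly_inner_representation[of "\<lambda>q. poly q 1" n] by auto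
  define \<rho> where "\<rho> = qform f r"
  have "r \<noteq> 0"
    using r_repr[of 1] by (auto simp: poly_inner_def)
  then have "0 < \<rho>"
    unfolding \<rho>_def by (rule qform_pos)
  have "poly r 1 = of_real \<rho>"
    using r_repr[OF r] by (simp add: poly_inner_self \<rho>_def)
  define p where "p = smult (of_real (1 / \<rho>)) r"
  have p: "p \<in> Qn1 n"
    unfolding Qn1_def p_def using r \<open>0 < \<rho>\<close> \<open>poly r 1 = of_real \<rho>\<close>
    by (auto intro: order.trans[OF degree_smult_le])
  show ?thesis
  proof (intro bexI[OF _ p] ballI)
    fix q
    assume q: "q \<in> Qn1 n"
    define d where "d = q - p"
    have "degree d \<le> n" "poly d 1 = 0"
      using q p unfolding d_def Qn1_def by (auto intro: degree_diff_le)
    then have "poly_inner f d p = 0"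
      unfolding p_def by (simp add: poly_inner_smult_right r_repr[symmetric])
    moreover have "poly_inner f p d = 0"
      using poly_inner_commute[of p d] calculation by simp
    ultimately have "poly_inner f (p + d) (p + d) = poly_inner f p p + poly_inner f d d"
      by (simp add: poly_inner_add_left poly_inner_add_right)
    then show "qform f q = qform f p + qform f (q - p)"
      by (simp add: poly_inner_self d_def flip: of_real_add)
  qed
qed

lemma ex1_qform_minimizer: "\<exists>!p. p \<in> Qn1 n \<and> (\<forall>q \<in> Qn1 n. qform f p \<le> qform f q)"
proof -
  obtain p where p: "p \<in> Qn1 n"
    and pythagoras: "\<And>q. q \<in> Qn1 n \<Longrightarrow> qform f q = qform f p + qform f (q - p)"
    using qform_Qn1_pythagoras[of n] by blast
  show ?thesis
  proof (rule ex1I[of _ p])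
    show "p \<in> Qn1 n \<and> (\<forall>q \<in> Qn1 n. qform f p \<le> qform f q)"
      using p pythagoras qform_nonneg by (metis le_add_same_cancel1)
    fix p'
    assume "p' \<in> Qn1 n \<and> (\<forall>q \<in> Qn1 n. qform f p' \<le> qform f q)"
    then have "qform f (p' - p) \<le> 0"
      using p pythagoras[of p'] by force
    then show "p' = p"
      using qform_pos[of "p' - p"] by fastforce
  qed
qed

lemma opt_poly_in_Qn1: "opt_poly f n \<in> Qn1 n"
  and qform_opt_poly_le: "q \<in> Qn1 n \<Longrightarrow> qform f (opt_poly f n) \<le> qform f q"
  using theI'[OF ex1_qform_minimizer[of n], folded opt_poly_def] by auto

lemma sigma2_eq_qform_opt_poly: "sigma2 f n = qform f (opt_poly f n)"
  unfolding sigma2_def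
  by (rule cInf_eq_minimum) (use opt_poly_in_Qn1 qform_opt_poly_le in auto)

lemma sigma2_pos: "0 < sigma2 f n"
  using opt_poly_in_Qn1[of n] by (auto simp: Qn1_def sigma2_eq_qform_opt_poly intro!: qform_pos)

lemma set_integral_opt_poly_one_minus_cos_le:
  "(LINT x:{-pi..pi}|lborel. (cmod (poly (opt_poly f n) (cis x)))\<^sup>2 * (1 - cos x) * f x)
     \<le> 2 * (sigma2 f n - sigma2 f (Suc n))"
proof -
  define p where "p = opt_poly f n"
  define q where "q = p * [:1/2, 1/2:]"
  have "q \<in> Qn1 (Suc n)"
    using opt_poly_in_Qn1[of n] degree_mult_le[of p "[:1/2, 1/2:]"]
    by (auto simp: Qn1_def q_def p_def)
  then have "sigma2 f (Suc n) \<le> qform f q"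
    by (simp add: sigma2_eq_qform_opt_poly qform_opt_poly_le)
  have "(cmod (poly q (cis x)))\<^sup>2 = (cmod (poly p (cis x)))\<^sup>2 * ((1 + cos x) / 2)" for x
  proof -
    have "(cmod (1/2 + 1/2 * cis x))\<^sup>2 = (1 + cos x) / 2"
      unfolding cmod_power2 by (simp add: power2_eq_square algebra_simps sin_squared_eq)
        (simp add: field_simps)
    moreover have "poly q (cis x) = poly p (cis x) * (1/2 + 1/2 * cis x)"
      by (simp add: q_def algebra_simps)
    ultimately show ?thesis
      by (simp only: norm_mult power_mult_distrib)
  qed
  then have "(LINT x:{-pi..pi}|lborel. (cmod (poly p (cis x)))\<^sup>2 * (1 - cos x) * f x)
      = (LINT x:{-pi..pi}|lborel. 2 * ((cmod (poly p (cis x)))\<^sup>2 * f x)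
                                  - 2 * ((cmod (poly q (cis x)))\<^sup>2 * f x))"
    by (intro set_lebesgue_integral_cong) (auto simp: algebra_simps)
  also have "\<dots> = 2 * qform f p - 2 * qform f q"
    unfolding qform_def using set_integrable_qform by simp
  also have "\<dots> \<le> 2 * (sigma2 f n - sigma2 f (Suc n))"
    using \<open>sigma2 f (Suc n) \<le> qform f q\<close> by (simp add: p_def sigma2_eq_qform_opt_poly)
  finally show ?thesis
    by (simp add: p_def)
qed

lemma var_mis_deviation_le:
  fixes g :: "real \<Rightarrow> real"
  assumes g_meas: "set_borel_measurable lborel {-pi..pi} g"
    and deviation: "\<And>x. x \<in> {-pi..pi} \<Longrightarrow> \<bar>g x - c\<bar> \<le> \<epsilon> + M * (1 - cos x)"
    and "0 \<le> M"
  shows "\<bar>var_mis f g n - c * sigma2 f n\<bar> \<le> \<epsilon> * sigma2 f n + 2 * M * (sigma2 f n - sigma2 f (Suc n))"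
proof -
  let ?S = "{-pi..pi}"
  define a where "a x = (cmod (poly (opt_poly f n) (cis x)))\<^sup>2" for x
  have "\<bar>g x\<bar> \<le> \<bar>c\<bar> + \<epsilon> + M * 2" if "x \<in> ?S" for x
    using deviation[OF that] mult_left_mono[OF _ \<open>0 \<le> M\<close>, of "1 - cos x" 2] by simp
  then have int_ag: "set_integrable lborel ?S (\<lambda>x. a x * g x * f x)"
    unfolding a_def by (rule set_integrable_poly_cis_bounded_mult[OF g_meas])
  have int_a: "set_integrable lborel ?S (\<lambda>x. a x * f x)"
    unfolding a_def by (rule set_integrable_qform)
  have int_a_cos: "set_integrable lborel ?S (\<lambda>x. a x * (1 - cos x) * f x)"
    using set_integrable_continuous_mult_weight[of "\<lambda>x. a x * (1 - cos x)"]
    by (simp add: a_def continuous_intros)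
  have "\<bar>var_mis f g n - c * sigma2 f n\<bar> = \<bar>LINT x:?S|lborel. a x * g x * f x - c * (a x * f x)\<bar>"
    using int_ag int_a by (simp add: var_mis_def qform_def sigma2_eq_qform_opt_poly a_def mult_ac)
  also have "\<dots> \<le> (LINT x:?S|lborel. \<epsilon> * (a x * f x) + M * (a x * (1 - cos x) * f x))"
  proof (rule abs_set_integral_le)
    fix x
    assume "x \<in> ?S"
    then have "0 \<le> a x * f x"
      using weight_nonneg by (simp add: a_def)
    have "a x * g x * f x - c * (a x * f x) = a x * f x * (g x - c)"
      by (simp add: algebra_simps)
    then have "\<bar>a x * g x * f x - c * (a x * f x)\<bar> = a x * f x * \<bar>g x - c\<bar>"
      by (simp only: abs_mult[of "a x * f x"] abs_of_nonneg[OF \<open>0 \<le> a x * f x\<close>])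
    also have "\<dots> \<le> a x * f x * (\<epsilon> + M * (1 - cos x))"
      using \<open>x \<in> ?S\<close> \<open>0 \<le> a x * f x\<close> deviation by (intro mult_left_mono) auto
    finally show "\<bar>a x * g x * f x - c * (a x * f x)\<bar> \<le> \<epsilon> * (a x * f x) + M * (a x * (1 - cos x) * f x)"
      by (simp add: algebra_simps)
  qed (use int_ag int_a int_a_cos in auto)
  also have "\<dots> = \<epsilon> * sigma2 f n + M * (LINT x:?S|lborel. a x * (1 - cos x) * f x)"
    using int_a int_a_cos by (simp add: sigma2_eq_qform_opt_poly qform_def a_def)
  also have "\<dots> \<le> \<epsilon> * sigma2 f n + M * (2 * (sigma2 f n - sigma2 f (Suc n)))"
    using set_integral_opt_poly_one_minus_cos_le[of n] \<open>0 \<le> M\<close>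
    by (intro add_left_mono mult_left_mono) (simp_all add: a_def)
  finally show ?thesis
    by (simp add: algebra_simps)
qed

lemma var_mis_ratio_deviation_le:
  fixes g :: "real \<Rightarrow> real"
  assumes "set_borel_measurable lborel {-pi..pi} g"
    and "\<And>x. x \<in> {-pi..pi} \<Longrightarrow> \<bar>g x - c\<bar> \<le> \<epsilon> + M * (1 - cos x)"
    and "0 \<le> M"
  shows "\<bar>var_mis f g n / sigma2 f n - c\<bar> \<le> \<epsilon> + 2 * M * (1 - sigma2 f (Suc n) / sigma2 f n)"
proof -
  have "var_mis f g n / sigma2 f n - c = (var_mis f g n - c * sigma2 f n) / sigma2 f n"
    using sigma2_pos[of n] by (simp add: field_simps)
  then have "\<bar>var_mis f g n / sigma2 f n - c\<bar> = \<bar>var_mis f g n - c * sigma2 f n\<bar> / sigma2 f n"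
    using sigma2_pos[of n] by simp
  also have "\<dots> \<le> (\<epsilon> * sigma2 f n + 2 * M * (sigma2 f n - sigma2 f (Suc n))) / sigma2 f n"
    using var_mis_deviation_le[OF assms] sigma2_pos[of n] by (intro divide_right_mono) auto
  also have "\<dots> = \<epsilon> + 2 * M * (1 - sigma2 f (Suc n) / sigma2 f n)"
    using sigma2_pos[of n] by (simp add: field_simps)
  finally show ?thesis .
qed

end

text \<open>Near 0 use continuity; away from 0 the term \<open>1 - cos x\<close> is bounded below, so a
  large \<open>M\<close> absorbs the bound on \<open>g\<close>.\<close>

lemma deviation_le_one_minus_cos:
  fixes g :: "real \<Rightarrow> real"
  assumes cont: "continuous (at 0 within {-pi..pi}) g"
    and bdd: "\<And>x. x \<in> {-pi..pi} \<Longrightarrow> \<bar>g x\<bar> \<le> B" and "0 < \<epsilon>"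
  obtains M where "0 \<le> M" "\<And>x. x \<in> {-pi..pi} \<Longrightarrow> \<bar>g x - g 0\<bar> \<le> \<epsilon> + M * (1 - cos x)"
proof -
  obtain d where "0 < d" and d: "\<And>x. x \<in> {-pi..pi} \<Longrightarrow> dist x 0 < d \<Longrightarrow> dist (g x) (g 0) < \<epsilon>"
    using cont \<open>0 < \<epsilon>\<close> unfolding continuous_within_eps_delta by blast
  define \<delta> where "\<delta> = min d pi"
  have "0 < \<delta>" "\<delta> \<le> pi"
    using \<open>0 < d\<close> by (auto simp: \<delta>_def)
  then have "cos \<delta> < 1"
    using cos_monotone_0_pi[of 0 \<delta>] by simp
  have "0 \<le> B"
    using bdd[of 0] by simp
  define M where "M = 2 * B / (1 - cos \<delta>)"
  show ?thesis
  proof (rule that)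
    show "0 \<le> M"
      using \<open>0 \<le> B\<close> \<open>cos \<delta> < 1\<close> by (simp add: M_def)
    fix x
    assume x: "x \<in> {-pi..pi}"
    show "\<bar>g x - g 0\<bar> \<le> \<epsilon> + M * (1 - cos x)"
    proof (cases "\<bar>x\<bar> < \<delta>")
      case True
      then have "\<bar>g x - g 0\<bar> < \<epsilon>"
        using d[OF x] by (simp add: \<delta>_def dist_real_def)
      moreover have "0 \<le> M * (1 - cos x)"
        using \<open>0 \<le> M\<close> by simp
      ultimately show ?thesis
        by linarith
    next
      case False
      then have "cos \<bar>x\<bar> \<le> cos \<delta>"
        using x \<open>0 < \<delta>\<close> by (intro cos_monotone_0_pi_le) auto
      then have "M * (1 - cos \<delta>) \<le> M * (1 - cos x)"
        using \<open>0 \<le> M\<close> by (intro mult_left_mono) auto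
      moreover have "M * (1 - cos \<delta>) = 2 * B"
        using \<open>cos \<delta> < 1\<close> by (simp add: M_def)
      moreover have "\<bar>g x - g 0\<bar> \<le> 2 * B"
        using bdd[OF x] bdd[of 0] by simp
      ultimately show ?thesis
        using \<open>0 < \<epsilon>\<close> by linarith
    qed
  qed
qed

theorem lemma5p3:
  fixes f g :: "real \<Rightarrow> real"
  assumes f_nonneg: "\<And>x. x \<in> {-pi..pi} \<Longrightarrow> f x \<ge> 0"
    and f_int: "set_integrable lborel {-pi..pi} f"
    and f_pos: "(LINT x:{-pi..pi}|lborel. f x) > 0"
    and ratio: "(\<lambda>n. sigma2 f (Suc n) / sigma2 f n) \<longlonglongrightarrow> 1"
    and g_nonneg: "\<And>x. x \<in> {-pi..pi} \<Longrightarrow> g x \<ge> 0"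
    and g_bdd: "\<exists>B. \<forall>x \<in> {-pi..pi}. g x \<le> B"
    and g_meas: "set_borel_measurable lborel {-pi..pi} g"
    and g_cont: "continuous (at 0 within {-pi..pi}) g"
  shows "(\<lambda>n. var_mis f g n / sigma2 f n) \<longlonglongrightarrow> g 0"
proof (rule tendstoI)
  interpret spectral_density f
    using f_int f_nonneg f_pos by unfold_locales
  fix e :: real
  assume "0 < e"
  obtain B where "\<forall>x \<in> {-pi..pi}. g x \<le> B"
    using g_bdd by blast
  then have "\<And>x. x \<in> {-pi..pi} \<Longrightarrow> \<bar>g x\<bar> \<le> B"
    using g_nonneg by fastforce
  then obtain M where "0 \<le> M"
    and deviation: "\<And>x. x \<in> {-pi..pi} \<Longrightarrow> \<bar>g x - g 0\<bar> \<le> e / 2 + M * (1 - cos x)"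
    using deviation_le_one_minus_cos[OF g_cont, of B "e / 2"] \<open>0 < e\<close> by auto
  have "(\<lambda>n. e / 2 + 2 * M * (1 - sigma2 f (Suc n) / sigma2 f n)) \<longlonglongrightarrow> e / 2 + 2 * M * (1 - 1)"
    by (intro tendsto_intros ratio)
  then have "eventually (\<lambda>n. e / 2 + 2 * M * (1 - sigma2 f (Suc n) / sigma2 f n) < e) sequentially"
    by (rule order_tendstoD(2)) (use \<open>0 < e\<close> in simp)
  then show "eventually (\<lambda>n. dist (var_mis f g n / sigma2 f n) (g 0) < e) sequentially"
    using var_mis_ratio_deviation_le[OF g_meas deviation \<open>0 \<le> M\<close>]
    by (auto simp: dist_real_def elim!: eventually_mono intro: order.strict_trans1)
qed

end
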